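(* Let $R$ be a ring, $S$ an $R$-algebra, and $\omega_{S/R}\colon R[[t]]\otimes_RS\to S[[t]]$ the natural map. The image of $\omega_{S/R}$ is the subring of series $\sum_ns_nt^n\in S[[t]]$ for which there exists a finitely generated $R$-submodule $M\subseteq S$ with $s_n\in M$ for all $n\in\mathbb{N}$. If every finitely generated $R$-submodule of $S$ is contained in a finitely presented $R$-submodule of $S$, then $\omega_{S/R}$ is injective. *)

theory Defs
  imports "HOL-Computational_Algebra.Formal_Power_Series" "HOL-Library.Poly_Mapping"
begin

text \<open>R is a commutative ring (type 'a), S is an R-algebra given by a ring homomorphism
  phi : R -> S (type 'b). The R-module structure on S is r . s = phi r * s,
  on R[[t]] it is r . f = fps_const r * f.\<close>

definition alg_hom :: "('a::comm_ring_1 \<Rightarrow> 'b::comm_ring_1) \<Rightarrow> bool" where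
  "alg_hom phi \<longleftrightarrow> phi 1 = 1 \<and> (\<forall>x y. phi (x + y) = phi x + phi y) \<and>
                      (\<forall>x y. phi (x * y) = phi x * phi y)"

definition fps_map :: "('a \<Rightarrow> 'b) \<Rightarrow> 'a fps \<Rightarrow> 'b fps" where
  "fps_map phi f = Abs_fps (\<lambda>n. phi (fps_nth f n))"

text \<open>Tensor product R[[t]] (x)_R S: the free abelian group on pairs (f, s),
  modulo the subgroup generated by the bilinearity / balancing relations.\<close>

definition tensor_rels :: "('a::comm_ring_1 \<Rightarrow> 'b::comm_ring_1) \<Rightarrow> ('a fps \<times> 'b \<Rightarrow>\<^sub>0 int) set" where
  "tensor_rels phi =
     {Poly_Mapping.single (f + g, s) 1 - Poly_Mapping.single (f, s) 1 - Poly_Mapping.single (g, s) 1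
        | f g s. True}
   \<union> {Poly_Mapping.single (f, s + s') 1 - Poly_Mapping.single (f, s) 1 - Poly_Mapping.single (f, s') 1
        | f s s'. True}
   \<union> {Poly_Mapping.single (fps_const r * f, s) 1 - Poly_Mapping.single (f, phi r * s) 1
        | r f s. True}"

inductive_set tensor_null :: "('a::comm_ring_1 \<Rightarrow> 'b::comm_ring_1) \<Rightarrow> ('a fps \<times> 'b \<Rightarrow>\<^sub>0 int) set"
  for phi where
  zero: "0 \<in> tensor_null phi"
| rel: "x \<in> tensor_rels phi \<Longrightarrow> x \<in> tensor_null phi"
| diff: "x \<in> tensor_null phi \<Longrightarrow> y \<in> tensor_null phi \<Longrightarrow> x - y \<in> tensor_null phi"

definition tensor_space :: "('a::comm_ring_1 \<Rightarrow> 'b::comm_ring_1) \<Rightarrow> ('a fps \<times> 'b \<Rightarrow>\<^sub>0 int) set set" where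
  "tensor_space phi = range (\<lambda>x. {y. x - y \<in> tensor_null phi})"

definition omega_free :: "('a::comm_ring_1 \<Rightarrow> 'b::comm_ring_1) \<Rightarrow> ('a fps \<times> 'b \<Rightarrow>\<^sub>0 int) \<Rightarrow> 'b fps" where
  "omega_free phi x =
     (\<Sum>p\<in>Poly_Mapping.keys x. of_int (Poly_Mapping.lookup x p) * fps_map phi (fst p) * fps_const (snd p))"

definition omega :: "('a::comm_ring_1 \<Rightarrow> 'b::comm_ring_1) \<Rightarrow> ('a fps \<times> 'b \<Rightarrow>\<^sub>0 int) set \<Rightarrow> 'b fps" where
  "omega phi X = omega_free phi (SOME x. x \<in> X)"

definition fg_submodule :: "('a::comm_ring_1 \<Rightarrow> 'b::comm_ring_1) \<Rightarrow> 'b set \<Rightarrow> bool" where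
  "fg_submodule phi M \<longleftrightarrow>
     (\<exists>(n::nat) gs. M = {(\<Sum>i<n. phi (c i) * gs i) | c. True})"

text \<open>Finitely presented R-submodule of S: generated by gs_0..gs_(n-1) such that the
  module of relations in R^n (vectors c with c i = 0 for i >= n) is finitely generated.\<close>
definition fp_submodule :: "('a::comm_ring_1 \<Rightarrow> 'b::comm_ring_1) \<Rightarrow> 'b set \<Rightarrow> bool" where
  "fp_submodule phi M \<longleftrightarrow>
     (\<exists>(n::nat) gs. M = {(\<Sum>i<n. phi (c i) * gs i) | c. True} \<and>
        (\<exists>(m::nat) rels. (\<forall>j<m. \<forall>i\<ge>n. rels j i = 0) \<and>
           {c. (\<forall>i\<ge>n. c i = 0) \<and> (\<Sum>i<n. phi (c i) * gs i) = 0}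
             = {(\<lambda>i. \<Sum>j<m. a j * rels j i) | a. True}))"

end

theory Submission
  imports Defs
begin

text \<open>Every tensor is a finite sum of pure tensors F_k (x) s_k, and omega maps it to the series
  with n-th coefficient sum_k phi(F_k$n) s_k; this describes the image. For injectivity, suppose
  such a sum is killed by omega. The s_k lie in a finitely presented submodule with generators g_i
  and relation vectors rho_j, and the sum can be rewritten as sum_i H_i (x) g_i. For every n the
  coefficient vector (H_i$n)_i is then a relation, hence a combination sum_j b_j(n) rho_j.
  Collecting the b_j(n) into power series A_j gives H_i = sum_j rho_j_i A_j, so the tensor equals
  sum_j A_j (x) (sum_i phi(rho_j_i) g_i) = 0.\<close>

abbreviation fin_span :: "('a::comm_ring_1 \<Rightarrow> 'b::comm_ring_1) \<Rightarrow> nat \<Rightarrow> (nat \<Rightarrow> 'b) \<Rightarrow> 'b set" where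
  "fin_span phi n gs \<equiv> {(\<Sum>i<n. phi (c i) * gs i) | c. True}"

definition tensor_equiv ::
    "('a::comm_ring_1 \<Rightarrow> 'b::comm_ring_1) \<Rightarrow> ('a fps \<times> 'b \<Rightarrow>\<^sub>0 int) \<Rightarrow> ('a fps \<times> 'b \<Rightarrow>\<^sub>0 int) \<Rightarrow> bool" where
  "tensor_equiv phi x y \<longleftrightarrow> x - y \<in> tensor_null phi"

definition tensor_class ::
    "('a::comm_ring_1 \<Rightarrow> 'b::comm_ring_1) \<Rightarrow> ('a fps \<times> 'b \<Rightarrow>\<^sub>0 int) \<Rightarrow> ('a fps \<times> 'b \<Rightarrow>\<^sub>0 int) set" where
  "tensor_class phi x = {y. tensor_equiv phi x y}"

lemma tensor_space_eq_range_tensor_class: "tensor_space phi = range (tensor_class phi)"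
  by (simp add: tensor_space_def tensor_class_def tensor_equiv_def)

lemma tensor_null_uminus: "x \<in> tensor_null phi \<Longrightarrow> - x \<in> tensor_null phi"
  using tensor_null.diff[OF tensor_null.zero] by fastforce

lemma tensor_null_add: "x \<in> tensor_null phi \<Longrightarrow> y \<in> tensor_null phi \<Longrightarrow> x + y \<in> tensor_null phi"
  using tensor_null.diff[of x phi "- y"] tensor_null_uminus[of y phi] by simp

lemma tensor_equiv_refl: "tensor_equiv phi x x"
  by (simp add: tensor_equiv_def tensor_null.zero)

lemma tensor_equiv_sym: "tensor_equiv phi x y \<Longrightarrow> tensor_equiv phi y x"
  unfolding tensor_equiv_def using tensor_null_uminus[of "x - y" phi] by simp

lemma tensor_equiv_trans [trans]:
  "tensor_equiv phi x y \<Longrightarrow> tensor_equiv phi y z \<Longrightarrow> tensor_equiv phi x z"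
  unfolding tensor_equiv_def using tensor_null_add[of "x - y" phi "y - z"] by simp

lemma tensor_equiv_add:
  "tensor_equiv phi a b \<Longrightarrow> tensor_equiv phi c d \<Longrightarrow> tensor_equiv phi (a + c) (b + d)"
  unfolding tensor_equiv_def using tensor_null_add[of "a - b" phi "c - d"] by (simp add: algebra_simps)

lemma tensor_equiv_diff:
  "tensor_equiv phi a b \<Longrightarrow> tensor_equiv phi c d \<Longrightarrow> tensor_equiv phi (a - c) (b - d)"
  unfolding tensor_equiv_def using tensor_null.diff[of "a - b" phi "c - d"] by (simp add: algebra_simps)

lemma tensor_equiv_sum:
  "(\<And>i. i \<in> A \<Longrightarrow> tensor_equiv phi (f i) (g i)) \<Longrightarrow> tensor_equiv phi (sum f A) (sum g A)"
  by (induction A rule: infinite_finite_induct) (auto intro: tensor_equiv_refl tensor_equiv_add)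

lemma tensor_class_eqI: "tensor_equiv phi x y \<Longrightarrow> tensor_class phi x = tensor_class phi y"
  unfolding tensor_class_def by (blast intro: tensor_equiv_sym tensor_equiv_trans)

lemma tensor_equiv_of_rel: "x - y \<in> tensor_rels phi \<Longrightarrow> tensor_equiv phi x y"
  by (simp add: tensor_equiv_def tensor_null.rel)

lemma frag_of_add_left: "tensor_equiv phi (frag_of (f + g, s)) (frag_of (f, s) + frag_of (g, s))"
  by (rule tensor_equiv_of_rel) (unfold tensor_rels_def diff_diff_eq[symmetric], blast)

lemma frag_of_add_right: "tensor_equiv phi (frag_of (f, s + s')) (frag_of (f, s) + frag_of (f, s'))"
  by (rule tensor_equiv_of_rel) (unfold tensor_rels_def diff_diff_eq[symmetric], blast)

lemma frag_of_scale: "tensor_equiv phi (frag_of (fps_const r * f, s)) (frag_of (f, phi r * s))"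
  by (rule tensor_equiv_of_rel) (unfold tensor_rels_def, blast)

lemma frag_of_zero_left: "tensor_equiv phi (frag_of (0, s)) 0"
  using tensor_equiv_sym[OF frag_of_add_left[of phi 0 0 s]] by (simp add: tensor_equiv_def)

lemma frag_of_zero_right: "tensor_equiv phi (frag_of (f, 0)) 0"
  using tensor_equiv_sym[OF frag_of_add_right[of phi f 0 0]] by (simp add: tensor_equiv_def)

lemma frag_of_diff_left: "tensor_equiv phi (frag_of (f - g, s)) (frag_of (f, s) - frag_of (g, s))"
  using tensor_equiv_sym[OF frag_of_add_left[of phi "f - g" g s]]
  by (simp add: tensor_equiv_def algebra_simps)

lemma frag_of_sum_left:
  "tensor_equiv phi (frag_of (sum f A, s)) (\<Sum>i\<in>A. frag_of (f i, s))"
proof (induction A rule: infinite_finite_induct)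
  case (insert x F)
  have "tensor_equiv phi (frag_of (f x + sum f F, s)) (frag_of (f x, s) + frag_of (sum f F, s))"
    by (rule frag_of_add_left)
  also have "tensor_equiv phi \<dots> (frag_of (f x, s) + (\<Sum>i\<in>F. frag_of (f i, s)))"
    by (rule tensor_equiv_add[OF tensor_equiv_refl insert.IH])
  finally show ?case using insert by simp
qed (simp_all add: frag_of_zero_left)

lemma frag_of_sum_right:
  "tensor_equiv phi (frag_of (f, sum g A)) (\<Sum>i\<in>A. frag_of (f, g i))"
proof (induction A rule: infinite_finite_induct)
  case (insert x F)
  have "tensor_equiv phi (frag_of (f, g x + sum g F)) (frag_of (f, g x) + frag_of (f, sum g F))"
    by (rule frag_of_add_right)
  also have "tensor_equiv phi \<dots> (frag_of (f, g x) + (\<Sum>i\<in>F. frag_of (f, g i)))"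
    by (rule tensor_equiv_add[OF tensor_equiv_refl insert.IH])
  finally show ?case using insert by simp
qed (simp_all add: frag_of_zero_right)

lemma sum_frag_of_move_scalars:
  fixes m n :: nat
  shows "tensor_equiv phi (\<Sum>k<m. frag_of (F k, \<Sum>i<n. phi (a k i) * gs i))
                          (\<Sum>i<n. frag_of (\<Sum>k<m. fps_const (a k i) * F k, gs i))"
proof -
  have "tensor_equiv phi (\<Sum>k<m. frag_of (F k, \<Sum>i<n. phi (a k i) * gs i))
                         (\<Sum>k<m. \<Sum>i<n. frag_of (fps_const (a k i) * F k, gs i))"
    by (intro tensor_equiv_sum tensor_equiv_trans[OF frag_of_sum_right])
       (rule tensor_equiv_sym[OF frag_of_scale])
  also have "\<dots> = (\<Sum>i<n. \<Sum>k<m. frag_of (fps_const (a k i) * F k, gs i))"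
    by (rule sum.swap)
  also have "tensor_equiv phi \<dots> (\<Sum>i<n. frag_of (\<Sum>k<m. fps_const (a k i) * F k, gs i))"
    by (intro tensor_equiv_sum tensor_equiv_sym[OF frag_of_sum_left])
  finally show ?thesis .
qed

lemma frag_cmul_frag_of_equiv_pure:
  "\<exists>g. tensor_equiv phi (frag_cmul c (frag_of (f, s))) (frag_of (g, s))"
proof (rule frag_closure_minus_cmul[where P = "\<lambda>x. \<exists>g. tensor_equiv phi x (frag_of (g, s))"])
  show "\<exists>g. tensor_equiv phi 0 (frag_of (g, s))"
    using tensor_equiv_sym[OF frag_of_zero_left] by blast
  show "\<exists>g. tensor_equiv phi (x - y) (frag_of (g, s))"
    if "\<exists>g. tensor_equiv phi x (frag_of (g, s))" "\<exists>g. tensor_equiv phi y (frag_of (g, s))" for x y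
    using that tensor_equiv_trans[OF tensor_equiv_diff tensor_equiv_sym[OF frag_of_diff_left]] by blast
qed (blast intro: tensor_equiv_refl)

lemma tensor_equiv_sum_frag_of:
  "\<exists>m F s. tensor_equiv phi x (\<Sum>k<(m::nat). frag_of (F k, s k))"
proof -
  let ?K = "Poly_Mapping.keys x"
  have "\<forall>p. \<exists>g. tensor_equiv phi (frag_cmul (Poly_Mapping.lookup x p) (frag_of p)) (frag_of (g, snd p))"
    using frag_cmul_frag_of_equiv_pure by (metis prod.collapse)
  then obtain g where g: "\<And>p. tensor_equiv phi (frag_cmul (Poly_Mapping.lookup x p) (frag_of p))
                                               (frag_of (g p, snd p))"
    by metis
  obtain h where h: "bij_betw h {..<card ?K} ?K"
    using ex_bij_betw_nat_finite[OF finite_keys] by (auto simp: atLeast0LessThan)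
  have "x = (\<Sum>p\<in>?K. frag_cmul (Poly_Mapping.lookup x p) (frag_of p))"
    using frag_expansion unfolding frag_extend_def .
  also have "tensor_equiv phi \<dots> (\<Sum>p\<in>?K. frag_of (g p, snd p))"
    by (intro tensor_equiv_sum g)
  also have "\<dots> = (\<Sum>k<card ?K. frag_of (g (h k), snd (h k)))"
    by (rule sum.reindex_bij_betw[OF h, symmetric])
  finally show ?thesis by (intro exI)
qed

lemma fps_map_nth [simp]: "fps_nth (fps_map phi f) n = phi (fps_nth f n)"
  by (simp add: fps_map_def)

lemma omega_free_eq_sum_superset:
  assumes "finite A" "Poly_Mapping.keys x \<subseteq> A"
  shows "omega_free phi x =
           (\<Sum>p\<in>A. of_int (Poly_Mapping.lookup x p) * fps_map phi (fst p) * fps_const (snd p))"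
  unfolding omega_free_def
  by (rule sum.mono_neutral_left) (use assms in \<open>auto simp: in_keys_iff\<close>)

lemma omega_free_add: "omega_free phi (x + y) = omega_free phi x + omega_free phi y"
  using keys_add[of x y]
  by (simp add: omega_free_eq_sum_superset[of "Poly_Mapping.keys x \<union> Poly_Mapping.keys y"]
      lookup_add distrib_right sum.distrib)

lemma omega_free_zero: "omega_free phi 0 = 0"
  by (simp add: omega_free_def)

lemma omega_free_diff: "omega_free phi (x - y) = omega_free phi x - omega_free phi y"
  using omega_free_add[of phi "x - y" y] by (simp add: algebra_simps)

lemma omega_free_sum: "omega_free phi (sum g A) = (\<Sum>i\<in>A. omega_free phi (g i))"
  by (induction A rule: infinite_finite_induct) (auto simp: omega_free_zero omega_free_add)

lemma omega_free_frag_of: "omega_free phi (frag_of (f, s)) = fps_map phi f * fps_const s"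
  by (subst omega_free_eq_sum_superset[of "{(f, s)}"]) auto

lemma omega_free_sum_frag_of_nth:
  "fps_nth (omega_free phi (\<Sum>k<m. frag_of (F k, s k))) n = (\<Sum>k<m. phi (fps_nth (F k) n) * s k)"
  by (simp add: omega_free_sum omega_free_frag_of fps_sum_nth)

lemma presentation_relation_vanishes:
  fixes phi :: "'a::comm_ring_1 \<Rightarrow> 'b::comm_ring_1"
    and n m :: nat
  assumes rels: "{c. (\<forall>i\<ge>n. c i = 0) \<and> (\<Sum>i<n. phi (c i) * gs i) = 0}
                   = {(\<lambda>i. \<Sum>j<m. a j * rels j i) | a. True}"
    and "j < m"
  shows "(\<Sum>i<n. phi (rels j i) * gs i) = 0"
proof -
  have rels_j: "rels j = (\<lambda>i. \<Sum>j'<m. of_bool (j' = j) * rels j' i)"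
    using \<open>j < m\<close> by (simp add: fun_eq_iff)
  have "rels j \<in> {(\<lambda>i. \<Sum>j<m. a j * rels j i) | a. True}"
    by (rule CollectI, rule exI[of _ "\<lambda>j'. of_bool (j' = j)"], rule conjI[OF rels_j TrueI])
  then show ?thesis
    unfolding rels[symmetric] by simp
qed

lemma fps_relations_lift:
  fixes phi :: "'a::comm_ring_1 \<Rightarrow> 'b::comm_ring_1"
    and n m :: nat
  assumes rels: "{c. (\<forall>i\<ge>n. c i = 0) \<and> (\<Sum>i<n. phi (c i) * gs i) = 0}
                   = {(\<lambda>i. \<Sum>j<m. a j * rels j i) | a. True}"
    and H: "\<And>k. (\<Sum>i<n. phi (fps_nth (H i) k) * gs i) = 0"
  obtains A where "\<And>i. i < n \<Longrightarrow> H i = (\<Sum>j<m. fps_const (rels j i) * A j)"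
proof -
  have "\<forall>k. \<exists>b. (\<lambda>i. if i < n then fps_nth (H i) k else 0) = (\<lambda>i. \<Sum>j<m. b j * rels j i)"
  proof
    fix k
    have "(\<lambda>i. if i < n then fps_nth (H i) k else 0)
            \<in> {c. (\<forall>i\<ge>n. c i = 0) \<and> (\<Sum>i<n. phi (c i) * gs i) = 0}"
      using H[of k] by auto
    then show "\<exists>b. (\<lambda>i. if i < n then fps_nth (H i) k else 0) = (\<lambda>i. \<Sum>j<m. b j * rels j i)"
      unfolding rels by blast
  qed
  then obtain b where b: "\<And>k. (\<lambda>i. if i < n then fps_nth (H i) k else 0)
                                 = (\<lambda>i. \<Sum>j<m. b k j * rels j i)"
    by metis
  show ?thesis
  proof (rule that[of "\<lambda>j. Abs_fps (\<lambda>k. b k j)"], rule fps_ext)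
    fix i k
    assume "i < n"
    then show "fps_nth (H i) k = fps_nth (\<Sum>j<m. fps_const (rels j i) * Abs_fps (\<lambda>k. b k j)) k"
      using fun_cong[OF b[of k], of i] by (simp add: fps_sum_nth mult.commute)
  qed
qed

lemma sum_frag_of_null_of_relations:
  fixes phi :: "'a::comm_ring_1 \<Rightarrow> 'b::comm_ring_1"
    and n m :: nat
  assumes "\<And>j. j < m \<Longrightarrow> (\<Sum>i<n. phi (rels j i) * gs i) = 0"
    and "\<And>i. i < n \<Longrightarrow> H i = (\<Sum>j<m. fps_const (rels j i) * A j)"
  shows "tensor_equiv phi (\<Sum>i<n. frag_of (H i, gs i)) 0"
proof -
  have "(\<Sum>i<n. frag_of (H i, gs i)) = (\<Sum>i<n. frag_of (\<Sum>j<m. fps_const (rels j i) * A j, gs i))"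
    using assms(2) by simp
  also have "tensor_equiv phi \<dots> (\<Sum>j<m. frag_of (A j, \<Sum>i<n. phi (rels j i) * gs i))"
    by (rule tensor_equiv_sym[OF sum_frag_of_move_scalars])
  also have "\<dots> = (\<Sum>j<m. frag_of (A j, 0))"
    using assms(1) by simp
  also have "tensor_equiv phi \<dots> 0"
    using tensor_equiv_sum[OF frag_of_zero_right] by simp
  finally show ?thesis .
qed

context
  fixes phi :: "'a::comm_ring_1 \<Rightarrow> 'b::comm_ring_1"
  assumes phi: "alg_hom phi"
begin

lemma alg_hom_add: "phi (x + y) = phi x + phi y"
  using phi by (simp add: alg_hom_def)

lemma alg_hom_mult: "phi (x * y) = phi x * phi y"
  using phi by (simp add: alg_hom_def)

lemma alg_hom_one: "phi 1 = 1"
  using phi by (simp add: alg_hom_def)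

lemma alg_hom_zero: "phi 0 = 0"
  using alg_hom_add[of 0 0] by simp

lemma omega_free_tensor_rels: "x \<in> tensor_rels phi \<Longrightarrow> omega_free phi x = 0"
  unfolding tensor_rels_def
  by (elim UnE CollectE exE conjE; hypsubst; intro fps_ext;
      simp add: omega_free_add omega_free_diff omega_free_frag_of alg_hom_add alg_hom_mult algebra_simps)

lemma omega_free_tensor_null: "x \<in> tensor_null phi \<Longrightarrow> omega_free phi x = 0"
  by (induction rule: tensor_null.induct)
     (simp_all add: omega_free_zero omega_free_diff omega_free_tensor_rels)

lemma omega_free_tensor_equiv: "tensor_equiv phi x y \<Longrightarrow> omega_free phi x = omega_free phi y"
  unfolding tensor_equiv_def using omega_free_tensor_null[of "x - y"] by (simp add: omega_free_diff)

lemma omega_tensor_class: "omega phi (tensor_class phi x) = omega_free phi x"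
proof -
  have "x \<in> tensor_class phi x"
    by (simp add: tensor_class_def tensor_equiv_refl)
  then have "(SOME y. y \<in> tensor_class phi x) \<in> tensor_class phi x"
    by (rule someI)
  then show ?thesis
    unfolding omega_def tensor_class_def by (simp add: omega_free_tensor_equiv)
qed

lemma generator_in_fin_span:
  assumes "k < m"
  shows "s k \<in> fin_span phi m s"
proof (intro CollectI exI conjI)
  have "phi (if i = k then 1 else 0) * s i = (if i = k then s k else 0)" for i
    by (simp add: alg_hom_one alg_hom_zero)
  then show "s k = (\<Sum>i<m. phi (if i = k then 1 else 0) * s i)"
    using assms by simp
qed simp

lemma sum_frag_of_null_if_fp:
  fixes m :: nat
  assumes fp: "\<forall>M. fg_submodule phi M \<longrightarrow> (\<exists>N. fp_submodule phi N \<and> M \<subseteq> N)"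
    and zero: "omega_free phi (\<Sum>k<m. frag_of (F k, s k)) = 0"
  shows "tensor_equiv phi (\<Sum>k<m. frag_of (F k, s k)) 0"
proof -
  have "fg_submodule phi (fin_span phi m s)"
    unfolding fg_submodule_def by blast
  then obtain N where fpN: "fp_submodule phi N" and sN: "fin_span phi m s \<subseteq> N"
    using fp by blast
  from fpN obtain n mm :: nat and gs rels where N: "N = fin_span phi n gs"
    and rels: "{c. (\<forall>i\<ge>n. c i = 0) \<and> (\<Sum>i<n. phi (c i) * gs i) = 0}
                 = {(\<lambda>i. \<Sum>j<mm. a j * rels j i) | a. True}"
    unfolding fp_submodule_def by blast
  have "s k \<in> fin_span phi n gs" if "k < m" for k
    using generator_in_fin_span[OF that] sN unfolding N by blast
  then have "\<forall>k. \<exists>a. k < m \<longrightarrow> s k = (\<Sum>i<n. phi (a i) * gs i)"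
    by blast
  then obtain a where a: "\<And>k. k < m \<Longrightarrow> s k = (\<Sum>i<n. phi (a k i) * gs i)"
    by metis
  define H where "H i = (\<Sum>k<m. fps_const (a k i) * F k)" for i
  have "(\<Sum>k<m. frag_of (F k, s k)) = (\<Sum>k<m. frag_of (F k, \<Sum>i<n. phi (a k i) * gs i))"
    using a by simp
  also have "tensor_equiv phi \<dots> (\<Sum>i<n. frag_of (H i, gs i))"
    unfolding H_def by (rule sum_frag_of_move_scalars)
  finally have regenerated: "tensor_equiv phi (\<Sum>k<m. frag_of (F k, s k)) (\<Sum>i<n. frag_of (H i, gs i))" .
  have "(\<Sum>i<n. phi (fps_nth (H i) k) * gs i) = fps_nth (omega_free phi (\<Sum>k<m. frag_of (F k, s k))) k"
    for k by (simp add: omega_free_tensor_equiv[OF regenerated] omega_free_sum_frag_of_nth)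
  then obtain A where A: "\<And>i. i < n \<Longrightarrow> H i = (\<Sum>j<mm. fps_const (rels j i) * A j)"
    using fps_relations_lift[OF rels] zero by auto
  have "tensor_equiv phi (\<Sum>i<n. frag_of (H i, gs i)) 0"
    by (rule sum_frag_of_null_of_relations[OF presentation_relation_vanishes[OF rels] A])
  with regenerated show ?thesis
    by (rule tensor_equiv_trans)
qed

lemma omega_image:
  "omega phi ` tensor_space phi = {F. \<exists>M. fg_submodule phi M \<and> (\<forall>n. fps_nth F n \<in> M)}"
proof (intro equalityI subsetI)
  fix G
  assume "G \<in> omega phi ` tensor_space phi"
  then obtain x where G: "G = omega_free phi x"
    by (auto simp: tensor_space_eq_range_tensor_class omega_tensor_class)
  obtain m :: nat and F s where "tensor_equiv phi x (\<Sum>k<m. frag_of (F k, s k))"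
    using tensor_equiv_sum_frag_of by blast
  then have "fps_nth G n = (\<Sum>k<m. phi (fps_nth (F k) n) * s k)" for n
    by (simp add: G omega_free_tensor_equiv omega_free_sum_frag_of_nth)
  then have "fps_nth G n \<in> fin_span phi m s" for n
    by (intro CollectI exI[of _ "\<lambda>k. fps_nth (F k) n"]) simp
  moreover have "fg_submodule phi (fin_span phi m s)"
    unfolding fg_submodule_def by blast
  ultimately show "G \<in> {F. \<exists>M. fg_submodule phi M \<and> (\<forall>n. fps_nth F n \<in> M)}"
    by blast
next
  fix G
  assume "G \<in> {F. \<exists>M. fg_submodule phi M \<and> (\<forall>n. fps_nth F n \<in> M)}"
  then obtain n gs where "\<forall>k. fps_nth G k \<in> fin_span phi n gs"
    unfolding fg_submodule_def by blast
  then have "\<forall>k. \<exists>c. fps_nth G k = (\<Sum>i<n. phi (c i) * gs i)"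
    by blast
  then obtain c where c: "\<And>k. fps_nth G k = (\<Sum>i<n. phi (c k i) * gs i)"
    by metis
  have "omega phi (tensor_class phi (\<Sum>i<n. frag_of (Abs_fps (\<lambda>k. c k i), gs i))) = G"
    by (rule fps_ext) (simp add: omega_tensor_class omega_free_sum_frag_of_nth c)
  then show "G \<in> omega phi ` tensor_space phi"
    unfolding tensor_space_eq_range_tensor_class by blast
qed

lemma inj_on_omega:
  assumes "\<forall>M. fg_submodule phi M \<longrightarrow> (\<exists>N. fp_submodule phi N \<and> M \<subseteq> N)"
  shows "inj_on (omega phi) (tensor_space phi)"
proof (rule inj_onI)
  fix X Y
  assume "X \<in> tensor_space phi" "Y \<in> tensor_space phi" and eq: "omega phi X = omega phi Y"
  then obtain x y where X: "X = tensor_class phi x" and Y: "Y = tensor_class phi y"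
    unfolding tensor_space_eq_range_tensor_class by blast
  obtain m :: nat and F s where xy: "tensor_equiv phi (x - y) (\<Sum>k<m. frag_of (F k, s k))"
    using tensor_equiv_sum_frag_of by blast
  have "omega_free phi (\<Sum>k<m. frag_of (F k, s k)) = 0"
    using eq omega_free_tensor_equiv[OF xy] by (simp add: X Y omega_tensor_class omega_free_diff)
  then have "tensor_equiv phi (\<Sum>k<m. frag_of (F k, s k)) 0"
    by (rule sum_frag_of_null_if_fp[OF assms])
  with xy have "tensor_equiv phi (x - y) 0"
    by (rule tensor_equiv_trans)
  then show "X = Y"
    unfolding X Y by (intro tensor_class_eqI) (simp add: tensor_equiv_def)
qed

end

theorem lemma2p4:
  fixes phi :: "'a::comm_ring_1 \<Rightarrow> 'b::comm_ring_1"
  assumes "alg_hom phi"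
  shows "omega phi ` tensor_space phi =
           {F. \<exists>M. fg_submodule phi M \<and> (\<forall>n. fps_nth F n \<in> M)}
         \<and> ((\<forall>M. fg_submodule phi M \<longrightarrow> (\<exists>N. fp_submodule phi N \<and> M \<subseteq> N))
              \<longrightarrow> inj_on (omega phi) (tensor_space phi))"
  using omega_image[OF assms] inj_on_omega[OF assms] by blast

end
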